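(* Let $\varphi \in \mathcal{L}^s(\Theta;\tau)$ for some $s\in\{\pm,+,-\}$, let $\rho$ be a valuation of $\Theta$ and let $i$ be an iteration variable. If $i \mathrel{\mathrm{Pos}} \varphi$, then $n \le m$ implies $[\![\varphi]\!]\rho[n/i] \subseteq [\![\varphi]\!]\rho[m/i]$. If $i \mathrel{\mathrm{Neg}} \varphi$, then $m \le n$ implies $[\![\varphi]\!]\rho[n/i] \subseteq [\![\varphi]\!]\rho[m/i]$.
   Context: Pure types: closed types of $\tau ::= \mathbf{1} \mid \tau\times\tau \mid \tau\to\tau \mid \tau+\tau \mid \alpha \mid \mu\alpha.\tau$, interpreted as Scott domains: $[\![\mathbf{1}]\!]=\{\bot\le\top\}$; products componentwise with projections $\pi_1,\pi_2$; $[\![\tau\to\sigma]\!]$ = Scott-continuous functions with pointwise order; $[\![\tau_1+\tau_2]\!]$ = disjoint union with a new bottom, with injections $\mathrm{inj}_i$; $[\![\mu\alpha.\tau]\!]$ = canonical bilimit solution with inverse isomorphisms $\mathrm{fold}:[\![\tau[\mu\alpha.\tau/\alpha]]\!]\to[\![\mu\alpha.\tau]\!]$, $\mathrm{unfold}$. Iteration terms: $t ::= i \mid 0 \mid t+1$. Fixpoint contexts $\Theta = X_1:\sigma_1,\dots,X_n:\sigma_n$. For $s\in\{\pm,+,-\}$, $\mathcal{L}^s(\Theta;\tau)$ is generated by: $\mathrm{True},\mathrm{False}$; closure under $\wedge,\vee$; $\langle()\rangle\in\mathcal{L}^s(\Theta;\mathbf{1})$; $\langle\pi_i\rangle\varphi$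 (type $\tau_1\times\tau_2$, $\varphi$ of type $\tau_i$); $\langle\mathrm{inj}_i\rangle\varphi$ (type $\tau_1+\tau_2$, $\varphi$ of type $\tau_i$); $\langle\mathrm{fold}\rangle\varphi$ (type $\mu\alpha.\tau$, $\varphi$ of type $\tau[\mu\alpha.\tau/\alpha]$); $X$ if $(X:\tau)\in\Theta$; weakening of $\Theta$; $(\mu^t X)\varphi,(\nu^t X)\varphi\in\mathcal{L}^s(\Theta;\tau)$ if $\varphi\in\mathcal{L}^s(\Theta,X:\tau;\tau)$; $(\exists i)\varphi\in\mathcal{L}^+(\Theta;\tau)$ if $\varphi\in\mathcal{L}^+(\Theta;\tau)$ and $i \mathrel{\mathrm{Pos}} \varphi$; $(\forall i)\varphi\in\mathcal{L}^-(\Theta;\tau)$ if $\varphi\in\mathcal{L}^-(\Theta;\tau)$ and $i\mathrel{\mathrm{Neg}}\varphi$; $\psi\Rightarrow\varphi\in\mathcal{L}^s(\,;\sigma\to\tau)$ if $\psi\in\mathcal{L}^{-s}(\,;\sigma)$ and $\varphi\in\mathcal{L}^s(\,;\tau)$, where $-\pm=\pm$, $-+=-$, $--=+$. The predicates Pos, Neg are inductively defined: $i\mathrel{\mathrm{Pos}}\varphi$ and $i\mathrel{\mathrm{Neg}}\varphi$ hold if $i$ not free in $\varphi$; both preserved by $\wedge,\vee$ and the modalities $\langle\pi_j\rangle,\langle\mathrm{inj}_j\rangle,\langle\mathrm{fold}\rangle$; $i\mathrel{\mathrm{Pos}}(\psi\Rightarrow\varphi)$ if $i\mathrel{\mathrm{Neg}}\psi$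 and $i\mathrel{\mathrm{Pos}}\varphi$; $i\mathrel{\mathrm{Neg}}(\psi\Rightarrow\varphi)$ if $i\mathrel{\mathrm{Pos}}\psi$ and $i\mathrel{\mathrm{Neg}}\varphi$; $i\mathrel{\mathrm{Pos}}(\exists j)\varphi$ if $i\mathrel{\mathrm{Pos}}\varphi$; $i\mathrel{\mathrm{Neg}}(\forall j)\varphi$ if $i\mathrel{\mathrm{Neg}}\varphi$; $i\mathrel{\mathrm{Pos}}(\mu^tX)\varphi$ if $i\mathrel{\mathrm{Pos}}\varphi$; $i\mathrel{\mathrm{Pos}}(\nu^tX)\varphi$ if $i\mathrel{\mathrm{Pos}}\varphi$ and $i$ not free in $t$; $i\mathrel{\mathrm{Neg}}(\nu^tX)\varphi$ if $i\mathrel{\mathrm{Neg}}\varphi$; $i\mathrel{\mathrm{Neg}}(\mu^tX)\varphi$ if $i\mathrel{\mathrm{Neg}}\varphi$ and $i$ not free in $t$. Semantics: a valuation $\rho$ of $\Theta$ maps each $(X:\sigma)\in\Theta$ to $\rho(X)\subseteq[\![\sigma]\!]$ and iteration variables to naturals ($[\![t]\!]\rho\in\mathbb{N}$). $[\![\mathrm{True}]\!]\rho=[\![\tau]\!]$, $[\![\mathrm{False}]\!]\rho=\emptyset$, $\wedge,\vee$ are $\cap,\cup$, $[\![X]\!]\rho=\rho(X)$, $[\![\langle()\rangle]\!]\rho=\{\top\}$, $[\![\langle\pi_i\rangle\varphi]\!]\rho=\{x\mid \pi_i(x)\in[\![\varphi]\!]\rho\}$, $[\![\langle\mathrm{inj}_i\rangle\varphi]\!]\rho=\{\mathrm{inj}_i(x)\mid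 x\in[\![\varphi]\!]\rho\}$, $[\![\langle\mathrm{fold}\rangle\varphi]\!]\rho=\{x\mid\mathrm{unfold}(x)\in[\![\varphi]\!]\rho\}$, $[\![\psi\Rightarrow\varphi]\!]\rho=\{f\mid\forall x\in[\![\psi]\!]\rho,\ f(x)\in[\![\varphi]\!]\rho\}$, $[\![(\exists i)\varphi]\!]\rho=\bigcup_{n}[\![\varphi]\!]\rho[n/i]$, $[\![(\forall i)\varphi]\!]\rho=\bigcap_{n}[\![\varphi]\!]\rho[n/i]$, and with $F(S)=[\![\varphi]\!]\rho[S/X]$, $n=[\![t]\!]\rho$: $[\![(\mu^tX)\varphi]\!]\rho=F^n(\emptyset)$, $[\![(\nu^tX)\varphi]\!]\rho=F^n([\![\tau]\!])$. *)

theory Defs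
  imports Main
begin

datatype ty = One | Prod ty ty | Arr ty ty | Sum ty ty | TVar nat | Mu ty

fun ty_ok :: "nat \<Rightarrow> ty \<Rightarrow> bool" where
  "ty_ok k One = True"
| "ty_ok k (Prod a b) = (ty_ok k a \<and> ty_ok k b)"
| "ty_ok k (Arr a b) = (ty_ok k a \<and> ty_ok k b)"
| "ty_ok k (Sum a b) = (ty_ok k a \<and> ty_ok k b)"
| "ty_ok k (TVar j) = (j < k)"
| "ty_ok k (Mu a) = ty_ok (Suc k) a"

definition closed_ty :: "ty \<Rightarrow> bool" where
  "closed_ty t = ty_ok 0 t"

fun lift_ty :: "nat \<Rightarrow> ty \<Rightarrow> ty" where
  "lift_ty k One = One"
| "lift_ty k (Prod a b) = Prod (lift_ty k a) (lift_ty k b)"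
| "lift_ty k (Arr a b) = Arr (lift_ty k a) (lift_ty k b)"
| "lift_ty k (Sum a b) = Sum (lift_ty k a) (lift_ty k b)"
| "lift_ty k (TVar j) = (if k \<le> j then TVar (Suc j) else TVar j)"
| "lift_ty k (Mu a) = Mu (lift_ty (Suc k) a)"

fun subst_ty :: "nat \<Rightarrow> ty \<Rightarrow> ty \<Rightarrow> ty" where
  "subst_ty k u One = One"
| "subst_ty k u (Prod a b) = Prod (subst_ty k u a) (subst_ty k u b)"
| "subst_ty k u (Arr a b) = Arr (subst_ty k u a) (subst_ty k u b)"
| "subst_ty k u (Sum a b) = Sum (subst_ty k u a) (subst_ty k u b)"
| "subst_ty k u (TVar j) = (if j = k then u else if k < j then TVar (j - 1) else TVar j)"
| "subst_ty k u (Mu a) = Mu (subst_ty (Suc k) (lift_ty 0 u) a)"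

definition unfold_ty :: "ty \<Rightarrow> ty" where
  "unfold_ty a = subst_ty 0 (Mu a) a"

datatype itm = IVar nat | IZero | ISuc itm

fun itm_vars :: "itm \<Rightarrow> nat set" where
  "itm_vars (IVar i) = {i}"
| "itm_vars IZero = {}"
| "itm_vars (ISuc t) = itm_vars t"

fun itm_eval :: "(nat \<Rightarrow> nat) \<Rightarrow> itm \<Rightarrow> nat" where
  "itm_eval r (IVar i) = r i"
| "itm_eval r IZero = 0"
| "itm_eval r (ISuc t) = Suc (itm_eval r t)"

datatype form =
    FTrue | FFalse | FAnd form form | FOr form form
  | FUnit
  | FPi1 form | FPi2 form
  | FInj1 form | FInj2 form
  | FFold form
  | FVar nat
  | FMu itm nat form
  | FNu itm nat form
  | FEx nat form
  | FAll nat form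
  | FImp form form

fun fiv :: "form \<Rightarrow> nat set" where
  "fiv FTrue = {}"
| "fiv FFalse = {}"
| "fiv (FAnd a b) = fiv a \<union> fiv b"
| "fiv (FOr a b) = fiv a \<union> fiv b"
| "fiv FUnit = {}"
| "fiv (FPi1 a) = fiv a"
| "fiv (FPi2 a) = fiv a"
| "fiv (FInj1 a) = fiv a"
| "fiv (FInj2 a) = fiv a"
| "fiv (FFold a) = fiv a"
| "fiv (FVar X) = {}"
| "fiv (FMu t X a) = itm_vars t \<union> fiv a"
| "fiv (FNu t X a) = itm_vars t \<union> fiv a"
| "fiv (FEx i a) = fiv a - {i}"
| "fiv (FAll i a) = fiv a - {i}"
| "fiv (FImp a b) = fiv a \<union> fiv b"

datatype pol = PM | PPlus | PMinus

fun neg_pol :: "pol \<Rightarrow> pol" where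
  "neg_pol PM = PM" | "neg_pol PPlus = PMinus" | "neg_pol PMinus = PPlus"

inductive ipos :: "nat \<Rightarrow> form \<Rightarrow> bool" and ineg :: "nat \<Rightarrow> form \<Rightarrow> bool" where
  pos_nf: "i \<notin> fiv a \<Longrightarrow> ipos i a"
| neg_nf: "i \<notin> fiv a \<Longrightarrow> ineg i a"
| pos_and: "ipos i a \<Longrightarrow> ipos i b \<Longrightarrow> ipos i (FAnd a b)"
| neg_and: "ineg i a \<Longrightarrow> ineg i b \<Longrightarrow> ineg i (FAnd a b)"
| pos_or: "ipos i a \<Longrightarrow> ipos i b \<Longrightarrow> ipos i (FOr a b)"
| neg_or: "ineg i a \<Longrightarrow> ineg i b \<Longrightarrow> ineg i (FOr a b)"
| pos_pi1: "ipos i a \<Longrightarrow> ipos i (FPi1 a)"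
| neg_pi1: "ineg i a \<Longrightarrow> ineg i (FPi1 a)"
| pos_pi2: "ipos i a \<Longrightarrow> ipos i (FPi2 a)"
| neg_pi2: "ineg i a \<Longrightarrow> ineg i (FPi2 a)"
| pos_inj1: "ipos i a \<Longrightarrow> ipos i (FInj1 a)"
| neg_inj1: "ineg i a \<Longrightarrow> ineg i (FInj1 a)"
| pos_inj2: "ipos i a \<Longrightarrow> ipos i (FInj2 a)"
| neg_inj2: "ineg i a \<Longrightarrow> ineg i (FInj2 a)"
| pos_fold: "ipos i a \<Longrightarrow> ipos i (FFold a)"
| neg_fold: "ineg i a \<Longrightarrow> ineg i (FFold a)"
| pos_imp: "ineg i b \<Longrightarrow> ipos i a \<Longrightarrow> ipos i (FImp b a)"
| neg_imp: "ipos i b \<Longrightarrow> ineg i a \<Longrightarrow> ineg i (FImp b a)"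
| pos_ex: "ipos i a \<Longrightarrow> ipos i (FEx j a)"
| neg_all: "ineg i a \<Longrightarrow> ineg i (FAll j a)"
| pos_mu: "ipos i a \<Longrightarrow> ipos i (FMu t X a)"
| pos_nu: "ipos i a \<Longrightarrow> i \<notin> itm_vars t \<Longrightarrow> ipos i (FNu t X a)"
| neg_nu: "ineg i a \<Longrightarrow> ineg i (FNu t X a)"
| neg_mu: "ineg i a \<Longrightarrow> i \<notin> itm_vars t \<Longrightarrow> ineg i (FMu t X a)"

text \<open>Fixpoint contexts are finite maps from fixpoint variables to types.
  wf s Theta phi tau  means  phi \<in> L^s(Theta; tau).\<close>

inductive wf :: "pol \<Rightarrow> (nat \<rightharpoonup> ty) \<Rightarrow> form \<Rightarrow> ty \<Rightarrow> bool" where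
  wf_true: "closed_ty t \<Longrightarrow> wf s G FTrue t"
| wf_false: "closed_ty t \<Longrightarrow> wf s G FFalse t"
| wf_and: "wf s G a t \<Longrightarrow> wf s G b t \<Longrightarrow> wf s G (FAnd a b) t"
| wf_or: "wf s G a t \<Longrightarrow> wf s G b t \<Longrightarrow> wf s G (FOr a b) t"
| wf_unit: "wf s G FUnit One"
| wf_pi1: "wf s G a t1 \<Longrightarrow> closed_ty t2 \<Longrightarrow> wf s G (FPi1 a) (Prod t1 t2)"
| wf_pi2: "wf s G a t2 \<Longrightarrow> closed_ty t1 \<Longrightarrow> wf s G (FPi2 a) (Prod t1 t2)"
| wf_inj1: "wf s G a t1 \<Longrightarrow> closed_ty t2 \<Longrightarrow> wf s G (FInj1 a) (Sum t1 t2)"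
| wf_inj2: "wf s G a t2 \<Longrightarrow> closed_ty t1 \<Longrightarrow> wf s G (FInj2 a) (Sum t1 t2)"
| wf_fold: "wf s G a (unfold_ty t) \<Longrightarrow> closed_ty (Mu t) \<Longrightarrow> wf s G (FFold a) (Mu t)"
| wf_var: "G X = Some t \<Longrightarrow> closed_ty t \<Longrightarrow> wf s G (FVar X) t"
| wf_weak: "wf s G a t \<Longrightarrow> G \<subseteq>\<^sub>m G' \<Longrightarrow> wf s G' a t"
| wf_mu: "wf s (G(X \<mapsto> t)) a t \<Longrightarrow> wf s G (FMu n X a) t"
| wf_nu: "wf s (G(X \<mapsto> t)) a t \<Longrightarrow> wf s G (FNu n X a) t"
| wf_ex: "wf PPlus G a t \<Longrightarrow> ipos i a \<Longrightarrow> wf PPlus G (FEx i a) t"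
| wf_all: "wf PMinus G a t \<Longrightarrow> ineg i a \<Longrightarrow> wf PMinus G (FAll i a) t"
| wf_imp: "wf (neg_pol s) Map.empty b sg \<Longrightarrow> wf s Map.empty a t \<Longrightarrow>
             wf s Map.empty (FImp b a) (Arr sg t)"

text \<open>An abstract interpretation of the pure types: a universe of values 'd,
  a carrier for each type, the top element of [[1]], projections, injections,
  unfold, and function application.  The Scott-domain interpretation of the paper
  is one instance.\<close>

record 'd sem_struct =
  dom :: "ty \<Rightarrow> 'd set"
  topv :: 'd
  proj1 :: "'d \<Rightarrow> 'd"
  proj2 :: "'d \<Rightarrow> 'd"
  inj1 :: "'d \<Rightarrow> 'd"
  inj2 :: "'d \<Rightarrow> 'd"
  unfoldv :: "'d \<Rightarrow> 'd"
  appv :: "'d \<Rightarrow> 'd \<Rightarrow> 'd"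

definition sem_ok :: "'d sem_struct \<Rightarrow> bool" where
  "sem_ok M \<longleftrightarrow> topv M \<in> dom M One
     \<and> (\<forall>t1 t2 x. closed_ty t1 \<longrightarrow> closed_ty t2 \<longrightarrow> x \<in> dom M t1 \<longrightarrow> inj1 M x \<in> dom M (Sum t1 t2))
     \<and> (\<forall>t1 t2 x. closed_ty t1 \<longrightarrow> closed_ty t2 \<longrightarrow> x \<in> dom M t2 \<longrightarrow> inj2 M x \<in> dom M (Sum t1 t2))"

text \<open>Semantics [[phi]]rho at type tau.  rs: values of fixpoint variables,
  ri: values of iteration variables.\<close>

fun sem :: "'d sem_struct \<Rightarrow> (nat \<Rightarrow> 'd set) \<Rightarrow> (nat \<Rightarrow> nat) \<Rightarrow> form \<Rightarrow> ty \<Rightarrow> 'd set" where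
  "sem M rs ri FTrue t = dom M t"
| "sem M rs ri FFalse t = {}"
| "sem M rs ri (FAnd a b) t = sem M rs ri a t \<inter> sem M rs ri b t"
| "sem M rs ri (FOr a b) t = sem M rs ri a t \<union> sem M rs ri b t"
| "sem M rs ri FUnit t = {topv M}"
| "sem M rs ri (FPi1 a) t = (case t of Prod t1 t2 \<Rightarrow>
      {x \<in> dom M t. proj1 M x \<in> sem M rs ri a t1} | _ \<Rightarrow> {})"
| "sem M rs ri (FPi2 a) t = (case t of Prod t1 t2 \<Rightarrow>
      {x \<in> dom M t. proj2 M x \<in> sem M rs ri a t2} | _ \<Rightarrow> {})"
| "sem M rs ri (FInj1 a) t = (case t of Sum t1 t2 \<Rightarrow>
      inj1 M ` sem M rs ri a t1 | _ \<Rightarrow> {})"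
| "sem M rs ri (FInj2 a) t = (case t of Sum t1 t2 \<Rightarrow>
      inj2 M ` sem M rs ri a t2 | _ \<Rightarrow> {})"
| "sem M rs ri (FFold a) t = (case t of Mu t1 \<Rightarrow>
      {x \<in> dom M t. unfoldv M x \<in> sem M rs ri a (unfold_ty t1)} | _ \<Rightarrow> {})"
| "sem M rs ri (FVar X) t = rs X"
| "sem M rs ri (FMu n X a) t =
      ((\<lambda>S. sem M (rs(X := S)) ri a t) ^^ itm_eval ri n) {}"
| "sem M rs ri (FNu n X a) t =
      ((\<lambda>S. sem M (rs(X := S)) ri a t) ^^ itm_eval ri n) (dom M t)"
| "sem M rs ri (FEx i a) t = (\<Union>k. sem M rs (ri(i := k)) a t)"
| "sem M rs ri (FAll i a) t = (\<Inter>k. sem M rs (ri(i := k)) a t)"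
| "sem M rs ri (FImp b a) t = (case t of Arr sg t2 \<Rightarrow>
      {f \<in> dom M t. \<forall>x \<in> sem M rs ri b sg. appv M f x \<in> sem M rs ri a t2} | _ \<Rightarrow> {})"

end

theory Submission
  imports Defs
begin

text \<open>Induction on the derivation of the formula, for Pos and Neg simultaneously (the premise
  of an implication swaps them). The fixpoint cases rest on two invariants: the semantics is
  monotone in the values of the fixpoint variables, so every approximation step
  S \<mapsto> [[phi]]rho[S/X] is monotone, and it stays inside the carrier [[tau]] on valuations.
  Hence the approximant F^k({}) of a least fixpoint grows with F and with k, while the
  approximant F^k([[tau]]) of a greatest fixpoint grows with F but shrinks with k; the
  side conditions on the bound t in the rules for mu^t and nu^t make k move in
  the right direction.\<close>

lemma funpow_invariant:
  assumes "P x" and "\<And>y. P y \<Longrightarrow> P (f y)"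
  shows "P ((f ^^ k) x)"
  using assms by (induction k) auto

lemma funpow_le_funpow:
  fixes f g :: "'a::order \<Rightarrow> 'a"
  assumes "mono g" and le: "\<And>y. y \<le> D \<Longrightarrow> f y \<le> g y"
    and into: "\<And>y. y \<le> D \<Longrightarrow> f y \<le> D" and "x \<le> D"
  shows "(f ^^ k) x \<le> (g ^^ k) x"
proof (induction k)
  case (Suc k)
  have "(f ^^ k) x \<le> D"
    using \<open>x \<le> D\<close> into by (rule funpow_invariant)
  then have "f ((f ^^ k) x) \<le> g ((f ^^ k) x)" by (rule le)
  also have "\<dots> \<le> g ((g ^^ k) x)" using \<open>mono g\<close> Suc.IH by (rule monoD)
  finally show ?case by simp
qed simp

lemma antimono_funpow_if_le:
  fixes f :: "'a::order \<Rightarrow> 'a"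
  assumes "mono f" and "f x \<le> x"
  shows "antimono (\<lambda>k. (f ^^ k) x)"
proof (rule antimonoI)
  fix j k :: nat
  assume "j \<le> k"
  then show "(f ^^ k) x \<le> (f ^^ j) x"
  proof (induction rule: dec_induct)
    case (step k)
    have "(f ^^ Suc k) x = (f ^^ k) (f x)" by (simp add: funpow_swap1)
    also have "\<dots> \<le> (f ^^ k) x" using assms by (rule funpow_mono)
    finally show ?case using step.IH by simp
  qed simp
qed

lemma funpow_bot_le:
  fixes f g :: "'a::order_bot \<Rightarrow> 'a"
  assumes "mono g" and "\<And>y. y \<le> D \<Longrightarrow> f y \<le> g y" and "\<And>y. y \<le> D \<Longrightarrow> f y \<le> D"
    and "j \<le> k"
  shows "(f ^^ j) bot \<le> (g ^^ k) bot"
proof -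
  have "(f ^^ j) bot \<le> (g ^^ j) bot" by (rule funpow_le_funpow[OF assms(1-3) bot_least])
  also have "\<dots> \<le> (g ^^ k) bot" using \<open>j \<le> k\<close> \<open>mono g\<close> by (rule funpow_decreasing)
  finally show ?thesis .
qed

lemma funpow_bound_le:
  fixes f g :: "'a::order \<Rightarrow> 'a"
  assumes "mono f" "mono g" and "\<And>y. y \<le> D \<Longrightarrow> f y \<le> g y" and "\<And>y. y \<le> D \<Longrightarrow> f y \<le> D"
    and "k \<le> j"
  shows "(f ^^ j) D \<le> (g ^^ k) D"
proof -
  have "(f ^^ j) D \<le> (f ^^ k) D"
    using antimono_funpow_if_le[OF \<open>mono f\<close> assms(4)[OF order_refl]] \<open>k \<le> j\<close>
    by (rule antimonoD)
  also have "\<dots> \<le> (g ^^ k) D" by (rule funpow_le_funpow[OF assms(2-4) order_refl])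
  finally show ?thesis .
qed

lemma itm_eval_upd_fresh: "i \<notin> itm_vars t \<Longrightarrow> itm_eval (ri(i := k)) t = itm_eval ri t"
  by (induction t) auto

lemma mono_itm_eval_upd: "mono (\<lambda>k. itm_eval (ri(i := k)) t)"
  by (induction t) (auto simp: mono_def)

lemma sem_upd_fresh: "i \<notin> fiv \<phi> \<Longrightarrow> sem M rs (ri(i := k)) \<phi> t = sem M rs ri \<phi> t"
proof (induction \<phi> arbitrary: rs ri t)
  case (FEx j a)
  then show ?case by (cases "i = j") (simp_all add: fun_upd_twist[of i j] del: fun_upd_apply)
next
  case (FAll j a)
  then show ?case by (cases "i = j") (simp_all add: fun_upd_twist[of i j] del: fun_upd_apply)
qed (auto simp: itm_eval_upd_fresh split: ty.splits)

inductive_cases ipos_elims: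
  "ipos i (FAnd a b)" "ipos i (FOr a b)" "ipos i (FPi1 a)" "ipos i (FPi2 a)"
  "ipos i (FInj1 a)" "ipos i (FInj2 a)" "ipos i (FFold a)" "ipos i (FImp b a)"
  "ipos i (FMu t X a)" "ipos i (FNu t X a)" "ipos i (FEx j a)" "ipos i (FAll j a)"

inductive_cases ineg_elims:
  "ineg i (FAnd a b)" "ineg i (FOr a b)" "ineg i (FPi1 a)" "ineg i (FPi2 a)"
  "ineg i (FInj1 a)" "ineg i (FInj2 a)" "ineg i (FFold a)" "ineg i (FImp b a)"
  "ineg i (FMu t X a)" "ineg i (FNu t X a)" "ineg i (FEx j a)" "ineg i (FAll j a)"

text \<open>Freshness (the rules pos_nf and neg_nf) passes to subformulas, so no freshness disjunct
  is needed on the right-hand sides.\<close>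

lemma ipos_simps [simp]:
  "ipos i (FAnd a b) \<longleftrightarrow> ipos i a \<and> ipos i b"
  "ipos i (FOr a b) \<longleftrightarrow> ipos i a \<and> ipos i b"
  "ipos i (FPi1 a) \<longleftrightarrow> ipos i a"
  "ipos i (FPi2 a) \<longleftrightarrow> ipos i a"
  "ipos i (FInj1 a) \<longleftrightarrow> ipos i a"
  "ipos i (FInj2 a) \<longleftrightarrow> ipos i a"
  "ipos i (FFold a) \<longleftrightarrow> ipos i a"
  "ipos i (FImp b a) \<longleftrightarrow> ineg i b \<and> ipos i a"
  "ipos i (FMu t X a) \<longleftrightarrow> ipos i a"
  "ipos i (FNu t X a) \<longleftrightarrow> ipos i a \<and> i \<notin> itm_vars t"
  "ipos i (FEx j a) \<longleftrightarrow> i = j \<or> ipos i a"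
  "ipos i (FAll j a) \<longleftrightarrow> i = j \<or> i \<notin> fiv a"
  by (auto elim!: ipos_elims intro: ipos_ineg.intros)

lemma ineg_simps [simp]:
  "ineg i (FAnd a b) \<longleftrightarrow> ineg i a \<and> ineg i b"
  "ineg i (FOr a b) \<longleftrightarrow> ineg i a \<and> ineg i b"
  "ineg i (FPi1 a) \<longleftrightarrow> ineg i a"
  "ineg i (FPi2 a) \<longleftrightarrow> ineg i a"
  "ineg i (FInj1 a) \<longleftrightarrow> ineg i a"
  "ineg i (FInj2 a) \<longleftrightarrow> ineg i a"
  "ineg i (FFold a) \<longleftrightarrow> ineg i a"
  "ineg i (FImp b a) \<longleftrightarrow> ipos i b \<and> ineg i a"
  "ineg i (FMu t X a) \<longleftrightarrow> ineg i a \<and> i \<notin> itm_vars t"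
  "ineg i (FNu t X a) \<longleftrightarrow> ineg i a"
  "ineg i (FEx j a) \<longleftrightarrow> i = j \<or> i \<notin> fiv a"
  "ineg i (FAll j a) \<longleftrightarrow> i = j \<or> ineg i a"
  by (auto elim!: ineg_elims intro: ipos_ineg.intros)

lemma wf_closed_ty: "wf s G \<phi> \<tau> \<Longrightarrow> closed_ty \<tau>"
  by (induction rule: wf.induct) (auto simp: closed_ty_def)

definition valuation :: "'d sem_struct \<Rightarrow> (nat \<rightharpoonup> ty) \<Rightarrow> (nat \<Rightarrow> 'd set) \<Rightarrow> bool" where
  "valuation M G rs \<longleftrightarrow> (\<forall>X \<sigma>. G X = Some \<sigma> \<longrightarrow> rs X \<subseteq> dom M \<sigma>)"

lemma valuation_upd:
  "valuation M G rs \<Longrightarrow> S \<subseteq> dom M \<sigma> \<Longrightarrow> valuation M (G(X \<mapsto> \<sigma>)) (rs(X := S))"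
  by (simp add: valuation_def)

lemma map_le_SomeD: "G \<subseteq>\<^sub>m G' \<Longrightarrow> G X = Some \<sigma> \<Longrightarrow> G' X = Some \<sigma>"
  unfolding map_le_def by (metis domI)

lemma valuation_map_le: "valuation M G' rs \<Longrightarrow> G \<subseteq>\<^sub>m G' \<Longrightarrow> valuation M G rs"
  unfolding valuation_def by (metis map_le_SomeD)

lemma sem_subset_dom:
  assumes "sem_ok M" and "wf s G \<phi> \<tau>" and "valuation M G rs"
  shows "sem M rs ri \<phi> \<tau> \<subseteq> dom M \<tau>"
  using assms(2,3)
proof (induction arbitrary: rs ri rule: wf.induct)
  case (wf_unit s G)
  then show ?case using \<open>sem_ok M\<close> by (simp add: sem_ok_def)
next
  case (wf_inj1 s G a t1 t2)
  have "closed_ty t1" using wf_inj1.hyps(1) by (rule wf_closed_ty)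
  then have "inj1 M x \<in> dom M (Sum t1 t2)" if "x \<in> dom M t1" for x
    using \<open>sem_ok M\<close> wf_inj1.hyps(2) that by (simp add: sem_ok_def)
  then show ?case using wf_inj1.IH[OF wf_inj1.prems, of ri] by auto
next
  case (wf_inj2 s G a t2 t1)
  have "closed_ty t2" using wf_inj2.hyps(1) by (rule wf_closed_ty)
  then have "inj2 M x \<in> dom M (Sum t1 t2)" if "x \<in> dom M t2" for x
    using \<open>sem_ok M\<close> wf_inj2.hyps(2) that by (simp add: sem_ok_def)
  then show ?case using wf_inj2.IH[OF wf_inj2.prems, of ri] by auto
next
  case (wf_var G X t s)
  then show ?case by (simp add: valuation_def)
next
  case (wf_weak s G a t G')
  then show ?case using valuation_map_le by blast
next
  case (wf_mu s G X t a n)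
  have "sem M (rs(X := S)) ri a t \<subseteq> dom M t" if "S \<subseteq> dom M t" for S
    using wf_mu.IH valuation_upd[OF wf_mu.prems that] by blast
  then show ?case
    by (simp del: fun_upd_apply) (rule funpow_invariant[where P = "\<lambda>S. S \<subseteq> dom M t"]; simp)
next
  case (wf_nu s G X t a n)
  have "sem M (rs(X := S)) ri a t \<subseteq> dom M t" if "S \<subseteq> dom M t" for S
    using wf_nu.IH valuation_upd[OF wf_nu.prems that] by blast
  then show ?case
    by (simp del: fun_upd_apply) (rule funpow_invariant[where P = "\<lambda>S. S \<subseteq> dom M t"]; simp)
next
  case (wf_ex G a t i)
  then show ?case by (simp del: fun_upd_apply) blast
next
  case (wf_all G a t i)
  then show ?case by (simp del: fun_upd_apply) blast
qed auto

text \<open>Only the variables bound in G are compared, and the subformulas of an implication live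
  in the empty context: there the lemma yields independence of the valuation, which disposes of
  the contravariant premise.\<close>

lemma sem_mono_valuation:
  assumes "wf s G \<phi> \<tau>" and "\<And>X \<sigma>. G X = Some \<sigma> \<Longrightarrow> rs X \<subseteq> rs' X"
  shows "sem M rs ri \<phi> \<tau> \<subseteq> sem M rs' ri \<phi> \<tau>"
  using assms
proof (induction arbitrary: rs rs' ri rule: wf.induct)
  case (wf_and s G a t b)
  then show ?case by (metis Int_mono sem.simps(3))
next
  case (wf_or s G a t b)
  then show ?case by (metis Un_mono sem.simps(4))
next
  case (wf_pi1 s G a t1 t2)
  then show ?case by auto
next
  case (wf_pi2 s G a t2 t1)
  then show ?case by auto
next
  case (wf_inj1 s G a t1 t2)
  then show ?case by (simp add: image_mono)
next
  case (wf_inj2 s G a t2 t1)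
  then show ?case by (simp add: image_mono)
next
  case (wf_fold s G a t)
  then show ?case by auto
next
  case (wf_weak s G a t G')
  then show ?case by (metis map_le_SomeD)
next
  case (wf_mu s G X t a n)
  have "mono (\<lambda>S. sem M (rs'(X := S)) ri a t)"
    by (rule monoI) (use wf_mu in \<open>simp add: wf_mu.IH\<close>)
  moreover have "sem M (rs(X := S)) ri a t \<subseteq> sem M (rs'(X := S)) ri a t" for S
    by (rule wf_mu.IH) (auto dest: wf_mu.prems split: if_splits)
  ultimately show ?case
    by (simp del: fun_upd_apply) (rule funpow_le_funpow[where D = UNIV]; simp)
next
  case (wf_nu s G X t a n)
  have "mono (\<lambda>S. sem M (rs'(X := S)) ri a t)"
    by (rule monoI) (use wf_nu in \<open>simp add: wf_nu.IH\<close>)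
  moreover have "sem M (rs(X := S)) ri a t \<subseteq> sem M (rs'(X := S)) ri a t" for S
    by (rule wf_nu.IH) (auto dest: wf_nu.prems split: if_splits)
  ultimately show ?case
    by (simp del: fun_upd_apply) (rule funpow_le_funpow[where D = UNIV]; simp)
next
  case (wf_ex G a t i)
  have "sem M rs (ri(i := k)) a t \<subseteq> sem M rs' (ri(i := k)) a t" for k
    using wf_ex.prems by (rule wf_ex.IH)
  then show ?case by (simp del: fun_upd_apply) blast
next
  case (wf_all G a t i)
  have "sem M rs (ri(i := k)) a t \<subseteq> sem M rs' (ri(i := k)) a t" for k
    using wf_all.prems by (rule wf_all.IH)
  then show ?case by (simp del: fun_upd_apply) blast
next
  case (wf_imp s b sg a t)
  have "sem M rs ri b sg = sem M rs' ri b sg"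
    using wf_imp.IH(1) by (simp add: subset_antisym)
  moreover have "sem M rs ri a t \<subseteq> sem M rs' ri a t"
    using wf_imp.IH(2) by simp
  ultimately show ?case by auto
qed simp_all

lemma mono_sem_upd:
  assumes "wf s (G(X \<mapsto> \<sigma>)) \<phi> \<tau>"
  shows "mono (\<lambda>S. sem M (rs(X := S)) ri \<phi> \<tau>)"
  by (rule monoI, rule sem_mono_valuation[OF assms]) auto

lemma sem_FMu_le:
  assumes "sem_ok M" and body: "wf s (G(X \<mapsto> t)) a t" and "valuation M G rs"
    and body_le: "\<And>S. S \<subseteq> dom M t \<Longrightarrow> sem M (rs(X := S)) ri a t \<subseteq> sem M (rs(X := S)) ri' a t"
    and "itm_eval ri tm \<le> itm_eval ri' tm"
  shows "sem M rs ri (FMu tm X a) t \<subseteq> sem M rs ri' (FMu tm X a) t"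
  using mono_sem_upd[OF body] body_le
    sem_subset_dom[OF \<open>sem_ok M\<close> body valuation_upd[OF \<open>valuation M G rs\<close>]]
    \<open>itm_eval ri tm \<le> itm_eval ri' tm\<close>
  by (simp del: fun_upd_apply) (rule funpow_bot_le[where D = "dom M t"])

lemma sem_FNu_le:
  assumes "sem_ok M" and body: "wf s (G(X \<mapsto> t)) a t" and "valuation M G rs"
    and body_le: "\<And>S. S \<subseteq> dom M t \<Longrightarrow> sem M (rs(X := S)) ri a t \<subseteq> sem M (rs(X := S)) ri' a t"
    and "itm_eval ri' tm \<le> itm_eval ri tm"
  shows "sem M rs ri (FNu tm X a) t \<subseteq> sem M rs ri' (FNu tm X a) t"
  using mono_sem_upd[OF body] mono_sem_upd[OF body] body_le
    sem_subset_dom[OF \<open>sem_ok M\<close> body valuation_upd[OF \<open>valuation M G rs\<close>]]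
    \<open>itm_eval ri' tm \<le> itm_eval ri tm\<close>
  by (simp del: fun_upd_apply) (rule funpow_bound_le)

lemma sem_mono_iteration_var:
  assumes "sem_ok M" and "wf s G \<phi> \<tau>" and "valuation M G rs"
  shows "(ipos i \<phi> \<longrightarrow> n \<le> m \<longrightarrow> sem M rs (ri(i := n)) \<phi> \<tau> \<subseteq> sem M rs (ri(i := m)) \<phi> \<tau>)
       \<and> (ineg i \<phi> \<longrightarrow> m \<le> n \<longrightarrow> sem M rs (ri(i := n)) \<phi> \<tau> \<subseteq> sem M rs (ri(i := m)) \<phi> \<tau>)"
  using assms(2,3)
proof (induction arbitrary: rs ri n m rule: wf.induct)
  case (wf_and s G a t b)
  show ?case using wf_and.IH[OF wf_and.prems, of n m ri] by (auto simp del: fun_upd_apply)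
next
  case (wf_or s G a t b)
  show ?case using wf_or.IH[OF wf_or.prems, of n m ri] by (auto simp del: fun_upd_apply)
next
  case (wf_pi1 s G a t1 t2)
  show ?case using wf_pi1.IH[OF wf_pi1.prems, of n m ri] by (auto simp del: fun_upd_apply)
next
  case (wf_pi2 s G a t2 t1)
  show ?case using wf_pi2.IH[OF wf_pi2.prems, of n m ri] by (auto simp del: fun_upd_apply)
next
  case (wf_inj1 s G a t1 t2)
  show ?case using wf_inj1.IH[OF wf_inj1.prems, of n m ri] by (auto simp del: fun_upd_apply)
next
  case (wf_inj2 s G a t2 t1)
  show ?case using wf_inj2.IH[OF wf_inj2.prems, of n m ri] by (auto simp del: fun_upd_apply)
next
  case (wf_fold s G a t)
  show ?case using wf_fold.IH[OF wf_fold.prems, of n m ri] by (auto simp del: fun_upd_apply)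
next
  case (wf_weak s G a t G')
  then show ?case using valuation_map_le by blast
next
  case (wf_mu s G X t a tm)
  have "sem M (rs(X := S)) (ri(i := n')) a t \<subseteq> sem M (rs(X := S)) (ri(i := m')) a t"
    if "S \<subseteq> dom M t" and "ipos i a \<and> n' \<le> m' \<or> ineg i a \<and> m' \<le> n'" for S n' m'
    using wf_mu.IH[OF valuation_upd[OF wf_mu.prems that(1)]] that(2) by blast
  then show ?case using mono_itm_eval_upd[THEN monoD]
    by (intro conjI impI sem_FMu_le[OF \<open>sem_ok M\<close> wf_mu.hyps wf_mu.prems])
      (auto simp: itm_eval_upd_fresh simp del: fun_upd_apply)
next
  case (wf_nu s G X t a tm)
  have "sem M (rs(X := S)) (ri(i := n')) a t \<subseteq> sem M (rs(X := S)) (ri(i := m')) a t"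
    if "S \<subseteq> dom M t" and "ipos i a \<and> n' \<le> m' \<or> ineg i a \<and> m' \<le> n'" for S n' m'
    using wf_nu.IH[OF valuation_upd[OF wf_nu.prems that(1)]] that(2) by blast
  then show ?case using mono_itm_eval_upd[THEN monoD]
    by (intro conjI impI sem_FNu_le[OF \<open>sem_ok M\<close> wf_nu.hyps wf_nu.prems])
      (auto simp: itm_eval_upd_fresh simp del: fun_upd_apply)
next
  case (wf_ex G a t j)
  have "ipos i a \<longrightarrow> n \<le> m \<longrightarrow> sem M rs (ri(j := l, i := n)) a t \<subseteq> sem M rs (ri(j := l, i := m)) a t"
    for l using wf_ex.IH[OF wf_ex.prems] by blast
  then show ?case
    by (cases "i = j")
      (auto simp: sem_upd_fresh fun_upd_twist[of i j] simp del: fun_upd_apply)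
next
  case (wf_all G a t j)
  have "ineg i a \<longrightarrow> m \<le> n \<longrightarrow> sem M rs (ri(j := l, i := n)) a t \<subseteq> sem M rs (ri(j := l, i := m)) a t"
    for l using wf_all.IH[OF wf_all.prems] by blast
  then show ?case
    by (cases "i = j")
      (auto simp: sem_upd_fresh fun_upd_twist[of i j] simp del: fun_upd_apply)
next
  case (wf_imp s b sg a t)
  have "valuation M Map.empty rs" by (simp add: valuation_def)
  then show ?case using wf_imp.IH(1)[of rs m n ri] wf_imp.IH(2)[of rs n m ri]
    by (auto simp del: fun_upd_apply)
qed simp_all

theorem lemma5p5:
  fixes M :: "'d sem_struct"
    and s :: pol and G :: "nat \<rightharpoonup> ty" and phi :: form and tau :: ty
    and rs :: "nat \<Rightarrow> 'd set" and ri :: "nat \<Rightarrow> nat" and i n m :: nat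
  assumes "sem_ok M"
    and "wf s G phi tau"
    and "\<And>X sg. G X = Some sg \<Longrightarrow> rs X \<subseteq> dom M sg"
  shows "(ipos i phi \<longrightarrow> n \<le> m \<longrightarrow>
            sem M rs (ri(i := n)) phi tau \<subseteq> sem M rs (ri(i := m)) phi tau)
       \<and> (ineg i phi \<longrightarrow> m \<le> n \<longrightarrow>
            sem M rs (ri(i := n)) phi tau \<subseteq> sem M rs (ri(i := m)) phi tau)"
proof -
  have "valuation M G rs" using assms(3) by (simp add: valuation_def)
  with assms(1,2) show ?thesis by (rule sem_mono_iteration_var)
qed

end
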